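(* Let $(a,b,c,\lambda,\delta)\in(\mathbb F^\times)^4\times\mathbb F$. For any $\triangle_q$-module $V$ and $v\in V$, there exists a $\triangle_q$-module homomorphism $W_\lambda^\delta(a,b,c)\to V$ sending $w_0$ to $v$ if and only if (i) there exists a $\triangle_q$-module homomorphism $M_\lambda(a,b,c)\to V$ sending $m_0$ to $v$, and (ii) $\prod_{i=0}^{d'-1}(A-\theta_i)v=\delta v$.
   Context: $\mathbb F$ is an algebraically closed field and $q\in\mathbb F^\times$ a root of unity of order $d\notin\{1,2,4\}$; $d'=d$ if $d$ odd, $d'=d/2$ if $d$ even. $\triangle_q$ is the unital associative $\mathbb F$-algebra with generators $A,B,C$ subject to: each of $A+\frac{qBC-q^{-1}CB}{q^2-q^{-2}}$, $B+\frac{qCA-q^{-1}AC}{q^2-q^{-2}}$, $C+\frac{qAB-q^{-1}BA}{q^2-q^{-2}}$ is central; $\alpha,\beta,\gamma$ are these times $q+q^{-1}$. For $(a,b,c,\lambda)\in(\mathbb F^\times)^4$, $i\in\mathbb N$: $\theta_i=a\lambda^{-1}q^{2i}+a^{-1}\lambda q^{-2i}$, $\theta_i^*=b\lambda^{-1}q^{2i}+b^{-1}\lambda q^{-2i}$, $\varphi_i=a^{-1}b^{-1}\lambda q(q^i-q^{-i})(\lambda^{-1}q^{i-1}-\lambda q^{1-i})(q^{-i}-abc\lambda^{-1}q^{i-1})(q^{-i}-abc^{-1}\lambda^{-1}q^{i-1})$. $M_\lambda(a,b,c)$ has basis $\{m_i\}_{i\in\mathbb N}$ with $(A-\theta_i)m_i=m_{i+1}$,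 $(B-\theta_i^* )m_i=\varphi_im_{i-1}$, and $\alpha,\beta,\gamma$ acting as $(b+b^{-1})(c+c^{-1})+(a+a^{-1})(\lambda q+\lambda^{-1}q^{-1})$, $(c+c^{-1})(a+a^{-1})+(b+b^{-1})(\lambda q+\lambda^{-1}q^{-1})$, $(a+a^{-1})(b+b^{-1})+(c+c^{-1})(\lambda q+\lambda^{-1}q^{-1})$. For $\delta\in\mathbb F$, $O_\lambda^\delta(a,b,c)$ is the span of $\{\delta m_i-m_{d'+i}\}_{i\in\mathbb N}$ (a submodule), $W_\lambda^\delta(a,b,c)=M_\lambda(a,b,c)/O_\lambda^\delta(a,b,c)$ and $w_i=m_i+O_\lambda^\delta(a,b,c)$. *)

theory Defs
  imports Main "HOL-Computational_Algebra.Polynomial"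
begin

definition alg_closed :: "'f::field itself \<Rightarrow> bool" where
  "alg_closed _ \<longleftrightarrow> (\<forall>p::'f poly. 0 < degree p \<longrightarrow> (\<exists>x. poly p x = 0))"

text \<open>A (candidate) module over the universal Askey-Wilson algebra: an F-vector space
  given on a carrier set, together with the actions of the generators A, B, C.\<close>
record ('f, 'v) tqmod =
  tcar :: "'v set"
  tzero :: 'v
  tadd :: "'v \<Rightarrow> 'v \<Rightarrow> 'v"
  tsmul :: "'f \<Rightarrow> 'v \<Rightarrow> 'v"
  tA :: "'v \<Rightarrow> 'v"
  tB :: "'v \<Rightarrow> 'v"
  tC :: "'v \<Rightarrow> 'v"

definition tsub :: "('f::field, 'v) tqmod \<Rightarrow> 'v \<Rightarrow> 'v \<Rightarrow> 'v" where
  "tsub V x y = tadd V x (tsmul V (-1) y)"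

definition vs_axioms :: "('f::field, 'v) tqmod \<Rightarrow> bool" where
  "vs_axioms V \<longleftrightarrow>
     tzero V \<in> tcar V \<and>
     (\<forall>x\<in>tcar V. \<forall>y\<in>tcar V. tadd V x y \<in> tcar V) \<and>
     (\<forall>c. \<forall>x\<in>tcar V. tsmul V c x \<in> tcar V) \<and>
     (\<forall>x\<in>tcar V. \<forall>y\<in>tcar V. \<forall>z\<in>tcar V. tadd V (tadd V x y) z = tadd V x (tadd V y z)) \<and>
     (\<forall>x\<in>tcar V. \<forall>y\<in>tcar V. tadd V x y = tadd V y x) \<and>
     (\<forall>x\<in>tcar V. tadd V (tzero V) x = x) \<and>
     (\<forall>x\<in>tcar V. \<exists>y\<in>tcar V. tadd V x y = tzero V) \<and>
     (\<forall>c. \<forall>x\<in>tcar V. \<forall>y\<in>tcar V. tsmul V c (tadd V x y) = tadd V (tsmul V c x) (tsmul V c y)) \<and>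
     (\<forall>c e. \<forall>x\<in>tcar V. tsmul V (c + e) x = tadd V (tsmul V c x) (tsmul V e x)) \<and>
     (\<forall>c e. \<forall>x\<in>tcar V. tsmul V (c * e) x = tsmul V c (tsmul V e x)) \<and>
     (\<forall>x\<in>tcar V. tsmul V 1 x = x)"

definition lin_op :: "('f::field, 'v) tqmod \<Rightarrow> ('v \<Rightarrow> 'v) \<Rightarrow> bool" where
  "lin_op V T \<longleftrightarrow> (\<forall>x\<in>tcar V. T x \<in> tcar V) \<and>
     (\<forall>x\<in>tcar V. \<forall>y\<in>tcar V. T (tadd V x y) = tadd V (T x) (T y)) \<and>
     (\<forall>c. \<forall>x\<in>tcar V. T (tsmul V c x) = tsmul V c (T x))"

definition ZA :: "'f::field \<Rightarrow> ('f, 'v) tqmod \<Rightarrow> 'v \<Rightarrow> 'v" where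
  "ZA q V x = tadd V (tA V x) (tsmul V (1 / (q^2 - inverse (q^2)))
      (tsub V (tsmul V q (tB V (tC V x))) (tsmul V (inverse q) (tC V (tB V x)))))"
definition ZB :: "'f::field \<Rightarrow> ('f, 'v) tqmod \<Rightarrow> 'v \<Rightarrow> 'v" where
  "ZB q V x = tadd V (tB V x) (tsmul V (1 / (q^2 - inverse (q^2)))
      (tsub V (tsmul V q (tC V (tA V x))) (tsmul V (inverse q) (tA V (tC V x)))))"
definition ZC :: "'f::field \<Rightarrow> ('f, 'v) tqmod \<Rightarrow> 'v \<Rightarrow> 'v" where
  "ZC q V x = tadd V (tC V x) (tsmul V (1 / (q^2 - inverse (q^2)))
      (tsub V (tsmul V q (tA V (tB V x))) (tsmul V (inverse q) (tB V (tA V x)))))"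

definition commutes_gens :: "('f::field, 'v) tqmod \<Rightarrow> ('v \<Rightarrow> 'v) \<Rightarrow> bool" where
  "commutes_gens V Z \<longleftrightarrow> (\<forall>x\<in>tcar V.
      Z (tA V x) = tA V (Z x) \<and> Z (tB V x) = tB V (Z x) \<and> Z (tC V x) = tC V (Z x))"

definition is_tq_module :: "'f::field \<Rightarrow> ('f, 'v) tqmod \<Rightarrow> bool" where
  "is_tq_module q V \<longleftrightarrow> vs_axioms V \<and> lin_op V (tA V) \<and> lin_op V (tB V) \<and> lin_op V (tC V) \<and>
     commutes_gens V (ZA q V) \<and> commutes_gens V (ZB q V) \<and> commutes_gens V (ZC q V)"

definition is_tq_hom :: "('f::field, 'v) tqmod \<Rightarrow> ('f, 'w) tqmod \<Rightarrow> ('v \<Rightarrow> 'w) \<Rightarrow> bool" where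
  "is_tq_hom V W f \<longleftrightarrow> (\<forall>x\<in>tcar V. f x \<in> tcar W) \<and>
     (\<forall>x\<in>tcar V. \<forall>y\<in>tcar V. f (tadd V x y) = tadd W (f x) (f y)) \<and>
     (\<forall>c. \<forall>x\<in>tcar V. f (tsmul V c x) = tsmul W c (f x)) \<and>
     (\<forall>x\<in>tcar V. f (tA V x) = tA W (f x)) \<and>
     (\<forall>x\<in>tcar V. f (tB V x) = tB W (f x)) \<and>
     (\<forall>x\<in>tcar V. f (tC V x) = tC W (f x))"

definition coset :: "('f::field, 'v) tqmod \<Rightarrow> 'v set \<Rightarrow> 'v \<Rightarrow> 'v set" where
  "coset V U x = {tadd V x u | u. u \<in> U}"

definition rep :: "'v set \<Rightarrow> 'v" where
  "rep X = (SOME x. x \<in> X)"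

definition quot_mod :: "('f::field, 'v) tqmod \<Rightarrow> 'v set \<Rightarrow> ('f, 'v set) tqmod" where
  "quot_mod V U = \<lparr> tcar = coset V U ` tcar V,
     tzero = coset V U (tzero V),
     tadd = (\<lambda>X Y. coset V U (tadd V (rep X) (rep Y))),
     tsmul = (\<lambda>c X. coset V U (tsmul V c (rep X))),
     tA = (\<lambda>X. coset V U (tA V (rep X))),
     tB = (\<lambda>X. coset V U (tB V (rep X))),
     tC = (\<lambda>X. coset V U (tC V (rep X))) \<rparr>"

definition theta :: "'f::field \<Rightarrow> 'f \<Rightarrow> 'f \<Rightarrow> nat \<Rightarrow> 'f" where
  "theta q a l i = a * inverse l * q powi (2 * int i) + inverse a * l * q powi (- 2 * int i)"

definition thetas :: "'f::field \<Rightarrow> 'f \<Rightarrow> 'f \<Rightarrow> nat \<Rightarrow> 'f" where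
  "thetas q b l i = b * inverse l * q powi (2 * int i) + inverse b * l * q powi (- 2 * int i)"

definition phi :: "'f::field \<Rightarrow> 'f \<Rightarrow> 'f \<Rightarrow> 'f \<Rightarrow> 'f \<Rightarrow> nat \<Rightarrow> 'f" where
  "phi q a b c l i = inverse a * inverse b * l * q
     * (q powi int i - q powi (- int i))
     * (inverse l * q powi (int i - 1) - l * q powi (1 - int i))
     * (q powi (- int i) - a * b * c * inverse l * q powi (int i - 1))
     * (q powi (- int i) - a * b * inverse c * inverse l * q powi (int i - 1))"

text \<open>The scalar by which gamma acts on M_lambda(a,b,c).\<close>
definition gam :: "'f::field \<Rightarrow> 'f \<Rightarrow> 'f \<Rightarrow> 'f \<Rightarrow> 'f \<Rightarrow> 'f" where
  "gam q a b c l = (a + inverse a) * (b + inverse b) + (c + inverse c) * (l * q + inverse l * inverse q)"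

text \<open>The module M_lambda(a,b,c): finitely supported coefficient sequences w.r.t. basis m_i.
  C is determined by A, B and the scalar action of gamma.\<close>
definition Mcar :: "(nat \<Rightarrow> 'f::field) set" where
  "Mcar = {x. finite {i. x i \<noteq> 0}}"

definition MA :: "'f::field \<Rightarrow> 'f \<Rightarrow> 'f \<Rightarrow> (nat \<Rightarrow> 'f) \<Rightarrow> nat \<Rightarrow> 'f" where
  "MA q a l x = (\<lambda>j. theta q a l j * x j + (if j = 0 then 0 else x (j - 1)))"

definition MB :: "'f::field \<Rightarrow> 'f \<Rightarrow> 'f \<Rightarrow> 'f \<Rightarrow> 'f \<Rightarrow> (nat \<Rightarrow> 'f) \<Rightarrow> nat \<Rightarrow> 'f" where
  "MB q a b c l x = (\<lambda>j. thetas q b l j * x j + phi q a b c l (Suc j) * x (Suc j))"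

definition MC :: "'f::field \<Rightarrow> 'f \<Rightarrow> 'f \<Rightarrow> 'f \<Rightarrow> 'f \<Rightarrow> (nat \<Rightarrow> 'f) \<Rightarrow> nat \<Rightarrow> 'f" where
  "MC q a b c l x = (\<lambda>j. gam q a b c l / (q + inverse q) * x j
     - 1 / (q^2 - inverse (q^2)) *
       (q * MA q a l (MB q a b c l x) j - inverse q * MB q a b c l (MA q a l x) j))"

definition Mmod :: "'f::field \<Rightarrow> 'f \<Rightarrow> 'f \<Rightarrow> 'f \<Rightarrow> 'f \<Rightarrow> ('f, nat \<Rightarrow> 'f) tqmod" where
  "Mmod q a b c l = \<lparr> tcar = Mcar, tzero = (\<lambda>_. 0),
     tadd = (\<lambda>x y j. x j + y j), tsmul = (\<lambda>e x j. e * x j),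
     tA = MA q a l, tB = MB q a b c l, tC = MC q a b c l \<rparr>"

definition mvec :: "nat \<Rightarrow> nat \<Rightarrow> 'f::field" where
  "mvec i = (\<lambda>j. if j = i then 1 else 0)"

definition dprime :: "nat \<Rightarrow> nat" where
  "dprime d = (if odd d then d else d div 2)"

definition Osub :: "'f::field \<Rightarrow> nat \<Rightarrow> (nat \<Rightarrow> 'f) set" where
  "Osub \<delta> d = {x. \<exists>N (co :: nat \<Rightarrow> 'f).
      x = (\<lambda>j. \<Sum>i<N. co i * (\<delta> * mvec i j - mvec (dprime d + i) j))}"

definition Wmod :: "'f::field \<Rightarrow> 'f \<Rightarrow> 'f \<Rightarrow> 'f \<Rightarrow> 'f \<Rightarrow> 'f \<Rightarrow> nat \<Rightarrow> ('f, (nat \<Rightarrow> 'f) set) tqmod" where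
  "Wmod q a b c l \<delta> d = quot_mod (Mmod q a b c l) (Osub \<delta> d)"

definition wvec :: "'f::field \<Rightarrow> 'f \<Rightarrow> 'f \<Rightarrow> 'f \<Rightarrow> 'f \<Rightarrow> 'f \<Rightarrow> nat \<Rightarrow> nat \<Rightarrow> (nat \<Rightarrow> 'f) set" where
  "wvec q a b c l \<delta> d i = coset (Mmod q a b c l) (Osub \<delta> d) (mvec i)"

fun prodA :: "('f::field, 'v) tqmod \<Rightarrow> (nat \<Rightarrow> 'f) \<Rightarrow> nat \<Rightarrow> 'v \<Rightarrow> 'v" where
  "prodA V th 0 v = v"
| "prodA V th (Suc k) v = tsub V (tA V (prodA V th k v)) (tsmul V (th k) (prodA V th k v))"

end

theory Submission
  imports Defs
begin

(* Since W = M/O, the universal property of the quotient identifies homomorphisms W -> V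
   sending w_0 to v with homomorphisms g : M -> V sending m_0 to v that vanish on O.  That O
   is a submodule rests on the sequences theta_i, theta*_i, phi_i having period d' in i
   (as q^(2d') = 1), together with phi_0 = 0.  Since m_i = prod_{k<i} (A - theta_k) m_0 and
   theta has period d', such a g maps delta m_i - m_(d'+i) to
   prod_{k<i} (A - theta_k) (delta v - prod_{k<d'} (A - theta_k) v),
   so g vanishes on O exactly when condition (ii) holds. *)

context
  fixes V :: "('f::field, 'v) tqmod"
  assumes vs: "vs_axioms V"
begin

lemma vs_zero_closed: "tzero V \<in> tcar V"
  using vs unfolding vs_axioms_def by blast

lemma vs_add_closed: "x \<in> tcar V \<Longrightarrow> y \<in> tcar V \<Longrightarrow> tadd V x y \<in> tcar V"
  using vs unfolding vs_axioms_def by simp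

lemma vs_smul_closed: "x \<in> tcar V \<Longrightarrow> tsmul V c x \<in> tcar V"
  using vs unfolding vs_axioms_def by blast

lemma vs_add_assoc:
  "x \<in> tcar V \<Longrightarrow> y \<in> tcar V \<Longrightarrow> z \<in> tcar V \<Longrightarrow> tadd V (tadd V x y) z = tadd V x (tadd V y z)"
  using vs unfolding vs_axioms_def by blast

lemma vs_add_commute: "x \<in> tcar V \<Longrightarrow> y \<in> tcar V \<Longrightarrow> tadd V x y = tadd V y x"
  using vs unfolding vs_axioms_def by blast

lemma vs_zero_add: "x \<in> tcar V \<Longrightarrow> tadd V (tzero V) x = x"
  using vs unfolding vs_axioms_def by blast

lemma vs_add_inverse: "x \<in> tcar V \<Longrightarrow> \<exists>y\<in>tcar V. tadd V x y = tzero V"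
  using vs unfolding vs_axioms_def by blast

lemma vs_smul_add:
  "x \<in> tcar V \<Longrightarrow> y \<in> tcar V \<Longrightarrow> tsmul V c (tadd V x y) = tadd V (tsmul V c x) (tsmul V c y)"
  using vs unfolding vs_axioms_def by blast

lemma vs_add_smul: "x \<in> tcar V \<Longrightarrow> tsmul V (c + e) x = tadd V (tsmul V c x) (tsmul V e x)"
  using vs unfolding vs_axioms_def by blast

lemma vs_smul_smul: "x \<in> tcar V \<Longrightarrow> tsmul V (c * e) x = tsmul V c (tsmul V e x)"
  using vs unfolding vs_axioms_def by blast

lemma vs_one_smul: "x \<in> tcar V \<Longrightarrow> tsmul V 1 x = x"
  using vs unfolding vs_axioms_def by blast

lemma vs_add_zero: "x \<in> tcar V \<Longrightarrow> tadd V x (tzero V) = x"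
  using vs_add_commute vs_zero_add vs_zero_closed by metis

lemma vs_zero_smul:
  assumes x: "x \<in> tcar V"
  shows "tsmul V 0 x = tzero V"
proof -
  let ?z = "tsmul V 0 x"
  have z: "?z \<in> tcar V" using x by (rule vs_smul_closed)
  obtain y where y: "y \<in> tcar V" "tadd V ?z y = tzero V" using vs_add_inverse[OF z] by blast
  have "tadd V ?z ?z = ?z" using vs_add_smul[OF x, of 0 0] by simp
  then have "tzero V = tadd V ?z (tadd V ?z y)" using vs_add_assoc[OF z z y(1)] y(2) by simp
  also have "\<dots> = ?z" using y vs_add_zero z by simp
  finally show ?thesis by simp
qed

lemma vs_smul_zero: "tsmul V c (tzero V) = tzero V"
  using vs_smul_smul[OF vs_zero_closed, of c 0] vs_zero_smul[OF vs_zero_closed] by simp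

lemma vs_add_neg: "x \<in> tcar V \<Longrightarrow> tadd V x (tsmul V (-1) x) = tzero V"
  using vs_add_smul[of x 1 "-1"] vs_one_smul vs_zero_smul by simp

lemma vs_lin_op_smul: "lin_op V (tsmul V c)"
  unfolding lin_op_def using vs_smul_closed vs_smul_add vs_smul_smul by (metis mult.commute)

lemma vs_add_add_swap:
  assumes "x \<in> tcar V" "y \<in> tcar V" "u \<in> tcar V" "w \<in> tcar V"
  shows "tadd V (tadd V x u) (tadd V y w) = tadd V (tadd V x y) (tadd V u w)"
proof -
  have "tadd V u (tadd V y w) = tadd V y (tadd V u w)"
    using assms vs_add_assoc vs_add_commute by metis
  then show ?thesis using assms vs_add_assoc vs_add_closed by metis
qed

end

lemma tq_hom_closed: "is_tq_hom V W g \<Longrightarrow> x \<in> tcar V \<Longrightarrow> g x \<in> tcar W"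
  and tq_hom_add: "is_tq_hom V W g \<Longrightarrow> x \<in> tcar V \<Longrightarrow> y \<in> tcar V \<Longrightarrow>
         g (tadd V x y) = tadd W (g x) (g y)"
  and tq_hom_smul: "is_tq_hom V W g \<Longrightarrow> x \<in> tcar V \<Longrightarrow> g (tsmul V c x) = tsmul W c (g x)"
  and tq_hom_A: "is_tq_hom V W g \<Longrightarrow> x \<in> tcar V \<Longrightarrow> g (tA V x) = tA W (g x)"
  and tq_hom_B: "is_tq_hom V W g \<Longrightarrow> x \<in> tcar V \<Longrightarrow> g (tB V x) = tB W (g x)"
  and tq_hom_C: "is_tq_hom V W g \<Longrightarrow> x \<in> tcar V \<Longrightarrow> g (tC V x) = tC W (g x)"
  by (simp_all add: is_tq_hom_def)

lemma tq_hom_zero: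
  assumes V: "vs_axioms V" and W: "vs_axioms W" and g: "is_tq_hom V W g"
  shows "g (tzero V) = tzero W"
proof -
  have "g (tzero V) = g (tsmul V 0 (tzero V))" using vs_zero_smul[OF V vs_zero_closed[OF V]] by simp
  also have "\<dots> = tsmul W 0 (g (tzero V))" using tq_hom_smul[OF g vs_zero_closed[OF V]] .
  also have "\<dots> = tzero W" using vs_zero_smul[OF W tq_hom_closed[OF g vs_zero_closed[OF V]]] .
  finally show ?thesis .
qed

lemma prodA_closed:
  assumes "vs_axioms V" "lin_op V (tA V)" "x \<in> tcar V"
  shows "prodA V th k x \<in> tcar V"
  using assms by (induction k) (auto simp: tsub_def lin_op_def intro!: vs_add_closed vs_smul_closed)

lemma tq_hom_prodA:
  assumes vs: "vs_axioms V" and A: "lin_op V (tA V)" and g: "is_tq_hom V W g" and x: "x \<in> tcar V"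
  shows "g (prodA V th k x) = prodA W th k (g x)"
proof (induction k)
  case (Suc k)
  let ?y = "prodA V th k x"
  have y: "?y \<in> tcar V" using vs A x by (rule prodA_closed)
  have Ay: "tA V ?y \<in> tcar V" using A y unfolding lin_op_def by blast
  have "g (prodA V th (Suc k) x) = tadd W (g (tA V ?y)) (g (tsmul V (-1) (tsmul V (th k) ?y)))"
    using tq_hom_add[OF g Ay] vs_smul_closed[OF vs] y by (simp add: tsub_def)
  also have "\<dots> = prodA W th (Suc k) (g x)"
    using Suc tq_hom_A[OF g y] tq_hom_smul[OF g] vs_smul_closed[OF vs] y by (simp add: tsub_def)
  finally show ?case .
qed simp

section \<open>Quotient modules\<close>

definition is_subspace :: "('f::field, 'v) tqmod \<Rightarrow> 'v set \<Rightarrow> bool" where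
  "is_subspace V U \<longleftrightarrow> U \<subseteq> tcar V \<and> tzero V \<in> U \<and>
     (\<forall>x\<in>U. \<forall>y\<in>U. tadd V x y \<in> U) \<and> (\<forall>c. \<forall>x\<in>U. tsmul V c x \<in> U)"

definition is_submodule :: "('f::field, 'v) tqmod \<Rightarrow> 'v set \<Rightarrow> bool" where
  "is_submodule V U \<longleftrightarrow> is_subspace V U \<and> (\<forall>x\<in>U. tA V x \<in> U \<and> tB V x \<in> U \<and> tC V x \<in> U)"

(* The operations of quot_mod act on the representative chosen by rep (a SOME);
   the lemmas below show that this choice does not matter. *)

context
  fixes V :: "('f::field, 'v) tqmod" and U :: "'v set"
  assumes vs: "vs_axioms V" and U: "is_subspace V U"
begin

lemma subspace_closed: "u \<in> U \<Longrightarrow> u \<in> tcar V"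
  using U unfolding is_subspace_def by blast

lemma subspace_zero: "tzero V \<in> U"
  using U unfolding is_subspace_def by blast

lemma subspace_add: "u \<in> U \<Longrightarrow> w \<in> U \<Longrightarrow> tadd V u w \<in> U"
  using U unfolding is_subspace_def by blast

lemma subspace_smul: "u \<in> U \<Longrightarrow> tsmul V c u \<in> U"
  using U unfolding is_subspace_def by blast

lemma coset_add_eq:
  assumes x: "x \<in> tcar V" and u: "u \<in> U"
  shows "coset V U (tadd V x u) = coset V U x"
proof (intro equalityI subsetI)
  fix y assume "y \<in> coset V U (tadd V x u)"
  then obtain w where w: "w \<in> U" and y: "y = tadd V (tadd V x u) w" unfolding coset_def by blast
  have "y = tadd V x (tadd V u w)"
    using y vs_add_assoc[OF vs x] w u subspace_closed by simp
  then show "y \<in> coset V U x" unfolding coset_def using subspace_add[OF u w] by blast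
next
  fix y assume "y \<in> coset V U x"
  then obtain w where w: "w \<in> U" and y: "y = tadd V x w" unfolding coset_def by blast
  let ?w' = "tadd V (tsmul V (-1) u) w"
  have w': "?w' \<in> U" using subspace_add subspace_smul u w by blast
  have cl: "u \<in> tcar V" "w \<in> tcar V" "tsmul V (-1) u \<in> tcar V"
    using u w subspace_closed vs_smul_closed[OF vs] by auto
  have "tadd V (tadd V x u) ?w' = tadd V x (tadd V (tadd V u (tsmul V (-1) u)) w)"
    using x cl by (simp add: vs_add_assoc[OF vs] vs_add_closed[OF vs])
  also have "\<dots> = y" using y cl vs_add_neg[OF vs] vs_zero_add[OF vs] by simp
  finally show "y \<in> coset V U (tadd V x u)" unfolding coset_def using w' by blast
qed

lemma rep_coset:
  assumes x: "x \<in> tcar V"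
  obtains u where "u \<in> U" "rep (coset V U x) = tadd V x u"
proof -
  have "x \<in> coset V U x"
    using vs_add_zero[OF vs x] subspace_zero unfolding coset_def by force
  then have "rep (coset V U x) \<in> coset V U x" unfolding rep_def by (rule someI)
  then show ?thesis using that unfolding coset_def by blast
qed

lemma rep_coset_closed: "x \<in> tcar V \<Longrightarrow> rep (coset V U x) \<in> tcar V"
  by (metis rep_coset vs_add_closed[OF vs] subspace_closed)

lemma coset_lin_op_rep_coset:
  assumes T: "lin_op V T" and T_U: "\<And>u. u \<in> U \<Longrightarrow> T u \<in> U" and x: "x \<in> tcar V"
  shows "coset V U (T (rep (coset V U x))) = coset V U (T x)"
proof -
  obtain u where "u \<in> U" "rep (coset V U x) = tadd V x u" using rep_coset[OF x] .
  then show ?thesis using T T_U x coset_add_eq subspace_closed by (simp add: lin_op_def)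
qed

lemma coset_add_rep_coset:
  assumes x: "x \<in> tcar V" and y: "y \<in> tcar V"
  shows "coset V U (tadd V (rep (coset V U x)) (rep (coset V U y))) = coset V U (tadd V x y)"
proof -
  obtain u where u: "u \<in> U" "rep (coset V U x) = tadd V x u" using rep_coset[OF x] .
  obtain w where w: "w \<in> U" "rep (coset V U y) = tadd V y w" using rep_coset[OF y] .
  have "tadd V (tadd V x u) (tadd V y w) = tadd V (tadd V x y) (tadd V u w)"
    using vs_add_add_swap[OF vs x y] u w subspace_closed by blast
  then show ?thesis
    using u w x y coset_add_eq vs_add_closed[OF vs] subspace_add by simp
qed

lemma tq_hom_rep_coset:
  assumes W: "vs_axioms W" and g: "is_tq_hom V W g" and g_U: "\<And>u. u \<in> U \<Longrightarrow> g u = tzero W"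
    and x: "x \<in> tcar V"
  shows "g (rep (coset V U x)) = g x"
proof -
  obtain u where "u \<in> U" "rep (coset V U x) = tadd V x u" using rep_coset[OF x] .
  then show ?thesis
    using tq_hom_add[OF g x] subspace_closed g_U vs_add_zero[OF W] tq_hom_closed[OF g x] by simp
qed

end

context
  fixes V :: "('f::field, 'v) tqmod" and U :: "'v set"
  assumes vs: "vs_axioms V" and A: "lin_op V (tA V)" and B: "lin_op V (tB V)" and C: "lin_op V (tC V)"
    and U: "is_submodule V U"
begin

lemma submodule_subspace: "is_subspace V U"
  using U unfolding is_submodule_def by blast

lemma tq_hom_comp_coset:
  assumes W: "vs_axioms W" and f: "is_tq_hom (quot_mod V U) W f"
  shows "is_tq_hom V W (\<lambda>x. f (coset V U x))"
proof -
  let ?Q = "quot_mod V U"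
  have U_sub: "is_subspace V U" by (rule submodule_subspace)
  have cos: "coset V U x \<in> tcar ?Q" if "x \<in> tcar V" for x
    using that by (simp add: quot_mod_def)
  have inv: "tA V u \<in> U" "tB V u \<in> U" "tC V u \<in> U" "tsmul V c u \<in> U" if "u \<in> U" for u c
    using U that subspace_smul[OF vs U_sub] unfolding is_submodule_def by auto
  show ?thesis
    unfolding is_tq_hom_def
  proof (intro conjI ballI allI)
    fix x assume x: "x \<in> tcar V"
    show "f (coset V U x) \<in> tcar W" using tq_hom_closed[OF f cos[OF x]] .
    show "f (coset V U (tA V x)) = tA W (f (coset V U x))"
      using tq_hom_A[OF f cos[OF x]] coset_lin_op_rep_coset[OF vs U_sub A _ x] inv by (simp add: quot_mod_def)
    show "f (coset V U (tB V x)) = tB W (f (coset V U x))"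
      using tq_hom_B[OF f cos[OF x]] coset_lin_op_rep_coset[OF vs U_sub B _ x] inv by (simp add: quot_mod_def)
    show "f (coset V U (tC V x)) = tC W (f (coset V U x))"
      using tq_hom_C[OF f cos[OF x]] coset_lin_op_rep_coset[OF vs U_sub C _ x] inv by (simp add: quot_mod_def)
  next
    fix c x assume x: "x \<in> tcar V"
    show "f (coset V U (tsmul V c x)) = tsmul W c (f (coset V U x))"
      using tq_hom_smul[OF f cos[OF x]] coset_lin_op_rep_coset[OF vs U_sub vs_lin_op_smul[OF vs] _ x] inv
      by (simp add: quot_mod_def)
  next
    fix x y assume x: "x \<in> tcar V" and y: "y \<in> tcar V"
    show "f (coset V U (tadd V x y)) = tadd W (f (coset V U x)) (f (coset V U y))"
      using tq_hom_add[OF f cos[OF x] cos[OF y]] coset_add_rep_coset[OF vs U_sub x y]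
      by (simp add: quot_mod_def)
  qed
qed

lemma tq_hom_comp_rep:
  assumes W: "vs_axioms W" and g: "is_tq_hom V W g" and g_U: "\<And>u. u \<in> U \<Longrightarrow> g u = tzero W"
  shows "is_tq_hom (quot_mod V U) W (\<lambda>X. g (rep X))"
proof -
  let ?Q = "quot_mod V U"
  have U_sub: "is_subspace V U" by (rule submodule_subspace)
  have g_rep: "g (rep (coset V U x)) = g x" if "x \<in> tcar V" for x
    using tq_hom_rep_coset[OF vs U_sub W g g_U that] .
  have closed: "tA V x \<in> tcar V" "tB V x \<in> tcar V" "tC V x \<in> tcar V" if "x \<in> tcar V" for x
    using A B C that unfolding lin_op_def by blast+
  show ?thesis
    unfolding is_tq_hom_def
  proof (intro conjI ballI allI)
    fix X assume "X \<in> tcar ?Q"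
    then have X: "rep X \<in> tcar V" using rep_coset_closed[OF vs U_sub] by (auto simp: quot_mod_def)
    show "g (rep X) \<in> tcar W" using tq_hom_closed[OF g X] .
    show "g (rep (tA ?Q X)) = tA W (g (rep X))"
      using g_rep closed X tq_hom_A[OF g X] by (simp add: quot_mod_def)
    show "g (rep (tB ?Q X)) = tB W (g (rep X))"
      using g_rep closed X tq_hom_B[OF g X] by (simp add: quot_mod_def)
    show "g (rep (tC ?Q X)) = tC W (g (rep X))"
      using g_rep closed X tq_hom_C[OF g X] by (simp add: quot_mod_def)
  next
    fix c X assume "X \<in> tcar ?Q"
    then have X: "rep X \<in> tcar V" using rep_coset_closed[OF vs U_sub] by (auto simp: quot_mod_def)
    show "g (rep (tsmul ?Q c X)) = tsmul W c (g (rep X))"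
      using g_rep vs_smul_closed[OF vs X] tq_hom_smul[OF g X] by (simp add: quot_mod_def)
  next
    fix X Y assume "X \<in> tcar ?Q" "Y \<in> tcar ?Q"
    then have X: "rep X \<in> tcar V" and Y: "rep Y \<in> tcar V"
      using rep_coset_closed[OF vs U_sub] by (auto simp: quot_mod_def)
    show "g (rep (tadd ?Q X Y)) = tadd W (g (rep X)) (g (rep Y))"
      using g_rep vs_add_closed[OF vs X Y] tq_hom_add[OF g X Y] by (simp add: quot_mod_def)
  qed
qed

lemma tq_hom_from_quot_mod_iff:
  assumes W: "vs_axioms W" and x: "x \<in> tcar V"
  shows "(\<exists>f. is_tq_hom (quot_mod V U) W f \<and> f (coset V U x) = w)
     \<longleftrightarrow> (\<exists>g. is_tq_hom V W g \<and> (\<forall>u\<in>U. g u = tzero W) \<and> g x = w)"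
proof
  assume "\<exists>f. is_tq_hom (quot_mod V U) W f \<and> f (coset V U x) = w"
  then obtain f where f: "is_tq_hom (quot_mod V U) W f" and fx: "f (coset V U x) = w" by blast
  let ?g = "\<lambda>x. f (coset V U x)"
  have g: "is_tq_hom V W ?g" by (rule tq_hom_comp_coset[OF W f])
  have "?g u = tzero W" if u: "u \<in> U" for u
  proof -
    have "coset V U u = coset V U (tzero V)"
      using coset_add_eq[OF vs submodule_subspace vs_zero_closed[OF vs] u]
        vs_zero_add[OF vs] subspace_closed[OF vs submodule_subspace u] by simp
    then show ?thesis using tq_hom_zero[OF vs W g] by simp
  qed
  then show "\<exists>g. is_tq_hom V W g \<and> (\<forall>u\<in>U. g u = tzero W) \<and> g x = w" using g fx by blast
next
  assume "\<exists>g. is_tq_hom V W g \<and> (\<forall>u\<in>U. g u = tzero W) \<and> g x = w"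
  then obtain g where g: "is_tq_hom V W g" and g_U: "\<And>u. u \<in> U \<Longrightarrow> g u = tzero W" and gx: "g x = w"
    by blast
  have "g (rep (coset V U x)) = w"
    using tq_hom_rep_coset[OF vs submodule_subspace W g g_U x] gx by simp
  then show "\<exists>f. is_tq_hom (quot_mod V U) W f \<and> f (coset V U x) = w"
    using tq_hom_comp_rep[OF W g g_U] by blast
qed

end

lemma Mmod_simps [simp]:
  "tcar (Mmod q a b c l) = Mcar" "tzero (Mmod q a b c l) = (\<lambda>_. 0)"
  "tadd (Mmod q a b c l) = (\<lambda>x y j. x j + y j)" "tsmul (Mmod q a b c l) = (\<lambda>e x j. e * x j)"
  "tA (Mmod q a b c l) = MA q a l" "tB (Mmod q a b c l) = MB q a b c l"
  "tC (Mmod q a b c l) = MC q a b c l"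
  by (simp_all add: Mmod_def)

lemma Mcar_iff_eventually_zero: "x \<in> Mcar \<longleftrightarrow> (\<exists>N. \<forall>j\<ge>N. x j = 0)"
  unfolding Mcar_def finite_nat_set_iff_bounded by (auto simp: not_less[symmetric])

lemma Mcar_zero: "(\<lambda>_. 0) \<in> Mcar"
  unfolding Mcar_iff_eventually_zero by simp

lemma Mcar_add: "x \<in> Mcar \<Longrightarrow> y \<in> Mcar \<Longrightarrow> (\<lambda>j. x j + y j) \<in> Mcar"
  unfolding Mcar_iff_eventually_zero by (metis (no_types) add.right_neutral max.boundedE)

lemma Mcar_smul: "x \<in> Mcar \<Longrightarrow> (\<lambda>j. s * x j) \<in> Mcar"
  unfolding Mcar_iff_eventually_zero by auto

lemma mvec_in_Mcar: "mvec i \<in> Mcar"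
  unfolding Mcar_iff_eventually_zero mvec_def by (auto intro: exI[of _ "Suc i"])

lemma MA_in_Mcar: "x \<in> Mcar \<Longrightarrow> MA q a l x \<in> Mcar"
proof -
  assume "x \<in> Mcar"
  then obtain N where "\<forall>j\<ge>N. x j = 0" unfolding Mcar_iff_eventually_zero by blast
  then have "\<forall>j\<ge>Suc N. MA q a l x j = 0" by (auto simp: MA_def)
  then show ?thesis unfolding Mcar_iff_eventually_zero by blast
qed

lemma MB_in_Mcar: "x \<in> Mcar \<Longrightarrow> MB q a b c l x \<in> Mcar"
proof -
  assume "x \<in> Mcar"
  then obtain N where "\<forall>j\<ge>N. x j = 0" unfolding Mcar_iff_eventually_zero by blast
  then have "\<forall>j\<ge>N. MB q a b c l x j = 0" by (auto simp: MB_def)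
  then show ?thesis unfolding Mcar_iff_eventually_zero by blast
qed

lemma MC_eq: "MC q a b c l x = (\<lambda>j. gam q a b c l / (q + inverse q) * x j
   + (- (q / (q^2 - inverse (q^2)))) * MA q a l (MB q a b c l x) j
   + (inverse q / (q^2 - inverse (q^2))) * MB q a b c l (MA q a l x) j)"
  unfolding MC_def by (rule ext) (simp add: divide_inverse algebra_simps)

lemma MC_in_Mcar: "x \<in> Mcar \<Longrightarrow> MC q a b c l x \<in> Mcar"
  unfolding MC_eq by (intro Mcar_add Mcar_smul MA_in_Mcar MB_in_Mcar)

lemma MA_add: "MA q a l (\<lambda>j. x j + y j) = (\<lambda>j. MA q a l x j + MA q a l y j)"
  unfolding MA_def by (rule ext) (simp add: algebra_simps)

lemma MA_smul: "MA q a l (\<lambda>j. s * x j) = (\<lambda>j. s * MA q a l x j)"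
  unfolding MA_def by (rule ext) (simp add: algebra_simps)

lemma MB_add: "MB q a b c l (\<lambda>j. x j + y j) = (\<lambda>j. MB q a b c l x j + MB q a b c l y j)"
  unfolding MB_def by (rule ext) (simp add: algebra_simps)

lemma MB_smul: "MB q a b c l (\<lambda>j. s * x j) = (\<lambda>j. s * MB q a b c l x j)"
  unfolding MB_def by (rule ext) (simp add: algebra_simps)

lemma MC_add: "MC q a b c l (\<lambda>j. x j + y j) = (\<lambda>j. MC q a b c l x j + MC q a b c l y j)"
  unfolding MC_eq MA_add MB_add by (rule ext) (simp add: divide_inverse algebra_simps)

lemma MC_smul: "MC q a b c l (\<lambda>j. s * x j) = (\<lambda>j. s * MC q a b c l x j)"
  unfolding MC_eq MA_smul MB_smul by (rule ext) (simp add: divide_inverse algebra_simps)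

lemma vs_axioms_Mmod: "vs_axioms (Mmod q a b c l)"
  unfolding vs_axioms_def
  by (auto simp: Mcar_zero Mcar_add Mcar_smul algebra_simps
      intro!: bexI[of _ "\<lambda>j. - _ j"] Mcar_smul[of _ "-1", simplified])

lemma lin_op_Mmod:
  "lin_op (Mmod q a b c l) (tA (Mmod q a b c l))"
  "lin_op (Mmod q a b c l) (tB (Mmod q a b c l))"
  "lin_op (Mmod q a b c l) (tC (Mmod q a b c l))"
  unfolding lin_op_def
  by (simp_all add: MA_in_Mcar MB_in_Mcar MC_in_Mcar MA_add MB_add MC_add MA_smul MB_smul MC_smul)

lemma prodA_Mmod_mvec:
  assumes "\<And>i. theta q a l (p + i) = theta q a l i"
  shows "prodA (Mmod q a b c l) (theta q a l) k (\<lambda>j. s * mvec p j) = (\<lambda>j. s * mvec (p + k) j)"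
proof (induction k)
  case (Suc k)
  show ?case
  proof
    fix j
    show "prodA (Mmod q a b c l) (theta q a l) (Suc k) (\<lambda>j. s * mvec p j) j = s * mvec (p + Suc k) j"
      using Suc assms[of k] by (cases j) (auto simp: tsub_def MA_def mvec_def algebra_simps)
  qed
qed simp

section \<open>Periodicity of \<open>\<theta>\<^sub>i\<close>, \<open>\<theta>\<^sup>*\<^sub>i\<close> and \<open>\<phi>\<^sub>i\<close>\<close>

lemma power_int_shift_half_period:
  fixes q :: "'f::field"
  assumes q: "q \<noteq> 0" and period: "q ^ (2 * D) = 1"
  shows "q powi (k + int D) = q powi k * q ^ D" and "q powi (k - int D) = q powi k * q ^ D"
proof -
  show "q powi (k + int D) = q powi k * q ^ D"
    using q by (simp add: power_int_add)
  have "q ^ D * q ^ D = 1" using period by (simp add: power_add[symmetric] mult_2)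
  then have "q powi (- int D) = q ^ D" by (simp add: power_int_minus inverse_unique)
  then show "q powi (k - int D) = q powi k * q ^ D"
    using q by (simp add: power_int_diff power_int_minus field_simps)
qed

lemma theta_add_period:
  fixes q :: "'f::field"
  assumes q: "q \<noteq> 0" and period: "q ^ (2 * D) = 1"
  shows "theta q a l (i + D) = theta q a l i" and "thetas q b l (i + D) = thetas q b l i"
proof -
  have e: "q ^ D * q ^ D = 1" using period by (simp add: power_add[symmetric] mult_2)
  have "q powi (2 * int (i + D)) = q powi ((2 * int i + int D) + int D)"
    by (rule arg_cong[of _ _ "power_int q"]) simp
  also have "\<dots> = q powi (2 * int i)"
    using e by (simp only: power_int_shift_half_period[OF q period] mult.assoc mult_1_right)
  finally have pos: "q powi (2 * int (i + D)) = q powi (2 * int i)" .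
  have "q powi (- 2 * int (i + D)) = q powi ((- 2 * int i - int D) - int D)"
    by (rule arg_cong[of _ _ "power_int q"]) simp
  also have "\<dots> = q powi (- 2 * int i)"
    using e by (simp only: power_int_shift_half_period[OF q period] mult.assoc mult_1_right)
  finally have neg: "q powi (- 2 * int (i + D)) = q powi (- 2 * int i)" .
  show "theta q a l (i + D) = theta q a l i" "thetas q b l (i + D) = thetas q b l i"
    unfolding theta_def thetas_def pos neg by simp_all
qed

lemma phi_add_period:
  fixes q :: "'f::field"
  assumes q: "q \<noteq> 0" and period: "q ^ (2 * D) = 1"
  shows "phi q a b c l (i + D) = phi q a b c l i"
proof -
  define e where "e = q ^ D"
  have e: "e * e = 1" using period unfolding e_def by (simp add: power_add[symmetric] mult_2)
  have s1: "q powi (int (i + D)) = q powi (int i) * e"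
    using power_int_shift_half_period(1)[OF q period, of "int i"] by (simp add: e_def)
  have s2: "q powi (- int (i + D)) = q powi (- int i) * e"
    using power_int_shift_half_period(2)[OF q period, of "- int i"] by (simp add: e_def)
  have s3: "q powi (int (i + D) - 1) = q powi (int i - 1) * e"
    using power_int_shift_half_period(1)[OF q period, of "int i - 1"] by (simp add: e_def algebra_simps)
  have s4: "q powi (1 - int (i + D)) = q powi (1 - int i) * e"
    using power_int_shift_half_period(2)[OF q period, of "1 - int i"] by (simp add: e_def algebra_simps)
  have "phi q a b c l (i + D) = (e * e) * (e * e) * phi q a b c l i"
    unfolding phi_def s1 s2 s3 s4 by (simp add: algebra_simps)
  then show ?thesis using e by simp
qed

lemma phi_zero: "phi q a b c l 0 = 0"
  unfolding phi_def by simp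

lemma power_double_dprime_eq_1:
  fixes q :: "'a::monoid_mult"
  assumes "q ^ d = 1"
  shows "q ^ (2 * dprime d) = 1"
proof (cases "odd d")
  case True
  then have "q ^ (2 * dprime d) = (q ^ d) ^ 2" by (simp add: dprime_def power_mult mult.commute)
  then show ?thesis using assms by simp
next
  case False
  then show ?thesis using assms by (simp add: dprime_def)
qed

section \<open>The submodule \<open>O\<^sub>\<lambda>\<^sup>\<delta>(a,b,c)\<close>\<close>

definition ovec :: "'f::field \<Rightarrow> nat \<Rightarrow> nat \<Rightarrow> nat \<Rightarrow> 'f" where
  "ovec \<delta> d i = (\<lambda>j. \<delta> * mvec i j - mvec (dprime d + i) j)"

lemma Osub_eq: "Osub \<delta> d = {x. \<exists>N co. x = (\<lambda>j. \<Sum>i<N. co i * ovec \<delta> d i j)}"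
  unfolding Osub_def ovec_def by simp

lemma zero_in_Osub: "(\<lambda>_. 0) \<in> Osub \<delta> d"
  unfolding Osub_eq by (auto intro: exI[of _ 0])

lemma ovec_in_Osub: "ovec \<delta> d k \<in> Osub \<delta> d"
  unfolding Osub_eq
  by (auto intro!: exI[of _ "Suc k"] exI[of _ "\<lambda>i. if i = k then 1 else 0"]
      simp: if_distrib[where f="\<lambda>x. x * _"] cong: if_cong)

lemma Osub_add:
  fixes \<delta> :: "'f::field"
  assumes "u \<in> Osub \<delta> d" "w \<in> Osub \<delta> d"
  shows "(\<lambda>j. u j + w j) \<in> Osub \<delta> d"
proof -
  obtain N1 co1 where u: "u = (\<lambda>j. \<Sum>i<N1. co1 i * ovec \<delta> d i j)"
    using assms(1) unfolding Osub_eq by auto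
  obtain N2 co2 where w: "w = (\<lambda>j. \<Sum>i<N2. co2 i * ovec \<delta> d i j)"
    using assms(2) unfolding Osub_eq by auto
  have pad: "(\<Sum>i<N1 + N2. if i < N then f i else 0) = (\<Sum>i<N. f i)"
    if "N \<le> N1 + N2" for N and f :: "nat \<Rightarrow> 'f"
    using that by (simp add: sum.inter_filter[symmetric] lessThan_def) (metis (lifting) less_le_trans)
  let ?co = "\<lambda>i. (if i < N1 then co1 i else 0) + (if i < N2 then co2 i else 0)"
  have "(\<lambda>j. u j + w j) = (\<lambda>j. \<Sum>i<N1 + N2. ?co i * ovec \<delta> d i j)"
    unfolding u w by (simp add: distrib_right sum.distrib if_distrib[where f="\<lambda>x. x * _"] pad cong: if_cong)
  then show ?thesis unfolding Osub_eq mem_Collect_eq by (intro exI[of _ "N1 + N2"] exI[of _ ?co])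
qed

lemma Osub_smul: "u \<in> Osub \<delta> d \<Longrightarrow> (\<lambda>j. s * u j) \<in> Osub \<delta> d"
  unfolding Osub_eq
  by (auto simp: sum_distrib_left mult.assoc intro!: exI[of _ "\<lambda>i. s * _ i"])

lemma Osub_induct [consumes 1, case_names zero step]:
  assumes u: "u \<in> Osub \<delta> d"
    and zero: "P (\<lambda>_. 0)"
    and step: "\<And>w s k. w \<in> Osub \<delta> d \<Longrightarrow> P w \<Longrightarrow> P (\<lambda>j. w j + s * ovec \<delta> d k j)"
  shows "P u"
proof -
  obtain N co where u_eq: "u = (\<lambda>j. \<Sum>i<N. co i * ovec \<delta> d i j)"
    using u unfolding Osub_eq by auto
  have "(\<lambda>j. \<Sum>i<N. co i * ovec \<delta> d i j) \<in> Osub \<delta> d \<and> P (\<lambda>j. \<Sum>i<N. co i * ovec \<delta> d i j)"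
  proof (induction N)
    case 0
    show ?case using zero zero_in_Osub by simp
  next
    case (Suc N)
    let ?w = "\<lambda>j. \<Sum>i<N. co i * ovec \<delta> d i j"
    have "(\<lambda>j. ?w j + co N * ovec \<delta> d N j) \<in> Osub \<delta> d \<and> P (\<lambda>j. ?w j + co N * ovec \<delta> d N j)"
      using Suc.IH step Osub_add Osub_smul ovec_in_Osub by blast
    then show ?case by simp
  qed
  then show ?thesis using u_eq by simp
qed

lemma ovec_in_Mcar: "ovec \<delta> d i \<in> Mcar"
  unfolding Mcar_iff_eventually_zero ovec_def mvec_def by (rule exI[of _ "Suc (dprime d + i)"]) simp

lemma Osub_subset_Mcar: "u \<in> Osub \<delta> d \<Longrightarrow> u \<in> Mcar"
proof (induction rule: Osub_induct)
  case zero
  show ?case by (rule Mcar_zero)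
next
  case (step w s k)
  show ?case by (rule Mcar_add[OF step.IH Mcar_smul[OF ovec_in_Mcar]])
qed

context
  fixes q :: "'f::field" and d :: nat
  assumes q: "q \<noteq> 0" and period: "q ^ (2 * dprime d) = 1"
begin

(* By the periodicity of theta, theta* and phi (and phi_0 = 0 at the boundary), A and B act on
   the spanning vectors delta m_i - m_(d'+i) of O exactly as on the m_i. *)
lemma MA_ovec: "MA q a l (ovec \<delta> d i) = (\<lambda>j. theta q a l i * ovec \<delta> d i j + ovec \<delta> d (Suc i) j)"
proof
  fix j
  have "theta q a l (dprime d + i) = theta q a l i"
    using theta_add_period(1)[OF q period] by (simp add: add.commute)
  then show "MA q a l (ovec \<delta> d i) j = theta q a l i * ovec \<delta> d i j + ovec \<delta> d (Suc i) j"
    unfolding MA_def ovec_def mvec_def by (cases j) (auto simp: algebra_simps)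
qed

lemma MB_ovec:
  "MB q a b c l (ovec \<delta> d i) = (\<lambda>j. thetas q b l i * ovec \<delta> d i j + phi q a b c l i * ovec \<delta> d (i - 1) j)"
proof
  fix j
  have thetas: "thetas q b l (dprime d + k) = thetas q b l k" for k
    using theta_add_period(2)[OF q period] by (simp add: add.commute)
  have phi: "phi q a b c l (dprime d + k) = phi q a b c l k" for k
    using phi_add_period[OF q period] by (simp add: add.commute)
  show "MB q a b c l (ovec \<delta> d i) j = thetas q b l i * ovec \<delta> d i j + phi q a b c l i * ovec \<delta> d (i - 1) j"
  proof (cases i)
    case 0
    then show ?thesis
      using thetas[of 0] phi[of 0] by (auto simp: MB_def ovec_def mvec_def phi_zero algebra_simps)
  next
    case (Suc k)
    then show ?thesis
      using thetas[of i] phi[of i] by (auto simp: MB_def ovec_def mvec_def algebra_simps)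
  qed
qed

lemma Osub_MA: "u \<in> Osub \<delta> d \<Longrightarrow> MA q a l u \<in> Osub \<delta> d"
proof (induction rule: Osub_induct)
  case zero
  show ?case using zero_in_Osub by (simp add: MA_def)
next
  case (step w s k)
  then show ?case by (simp add: MA_add MA_smul MA_ovec Osub_add Osub_smul ovec_in_Osub)
qed

lemma Osub_MB: "u \<in> Osub \<delta> d \<Longrightarrow> MB q a b c l u \<in> Osub \<delta> d"
proof (induction rule: Osub_induct)
  case zero
  show ?case using zero_in_Osub by (simp add: MB_def)
next
  case (step w s k)
  then show ?case by (simp add: MB_add MB_smul MB_ovec Osub_add Osub_smul ovec_in_Osub)
qed

lemma Osub_MC: "u \<in> Osub \<delta> d \<Longrightarrow> MC q a b c l u \<in> Osub \<delta> d"
  unfolding MC_eq by (intro Osub_add Osub_smul Osub_MA Osub_MB)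

lemma is_submodule_Osub: "is_submodule (Mmod q a b c l) (Osub \<delta> d)"
  unfolding is_submodule_def is_subspace_def
  using Osub_subset_Mcar zero_in_Osub Osub_add Osub_smul Osub_MA Osub_MB Osub_MC by auto

end

section \<open>Homomorphisms out of \<open>M\<^sub>\<lambda>(a,b,c)\<close>\<close>

context
  fixes q a b c l :: "'f::field" and V :: "('f, 'v) tqmod" and g :: "(nat \<Rightarrow> 'f) \<Rightarrow> 'v"
  assumes g: "is_tq_hom (Mmod q a b c l) V g"
begin

lemma Mmod_hom_add: "x \<in> Mcar \<Longrightarrow> y \<in> Mcar \<Longrightarrow> g (\<lambda>j. x j + y j) = tadd V (g x) (g y)"
  using tq_hom_add[OF g] by simp

lemma Mmod_hom_smul: "x \<in> Mcar \<Longrightarrow> g (\<lambda>j. s * x j) = tsmul V s (g x)"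
  using tq_hom_smul[OF g] by simp

lemma Mmod_hom_mvec_shift:
  assumes "\<And>i. theta q a l (p + i) = theta q a l i"
  shows "g (\<lambda>j. s * mvec (p + k) j) = prodA V (theta q a l) k (g (\<lambda>j. s * mvec p j))"
proof -
  have "g (\<lambda>j. s * mvec (p + k) j) = g (prodA (Mmod q a b c l) (theta q a l) k (\<lambda>j. s * mvec p j))"
    using prodA_Mmod_mvec[OF assms] by simp
  also have "\<dots> = prodA V (theta q a l) k (g (\<lambda>j. s * mvec p j))"
    by (rule tq_hom_prodA[OF vs_axioms_Mmod lin_op_Mmod(1) g]) (simp add: Mcar_smul mvec_in_Mcar)
  finally show ?thesis .
qed

lemma Mmod_hom_mvec: "g (mvec k) = prodA V (theta q a l) k (g (mvec 0))"
  using Mmod_hom_mvec_shift[where p=0 and k=k and s=1] by simp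

lemma Mmod_hom_ovec:
  assumes q: "q \<noteq> 0" and period: "q ^ (2 * dprime d) = 1" and V: "vs_axioms V"
    and P: "prodA V (theta q a l) (dprime d) (g (mvec 0)) = tsmul V \<delta> (g (mvec 0))"
  shows "g (ovec \<delta> d i) = tzero V"
proof -
  let ?D = "dprime d" and ?y = "prodA V (theta q a l) i (tsmul V \<delta> (g (mvec 0)))"
  have theta_D: "theta q a l (?D + i) = theta q a l i" for i
    using theta_add_period(1)[OF q period] by (simp add: add.commute)
  have y1: "g (\<lambda>j. \<delta> * mvec i j) = ?y"
    using Mmod_hom_mvec_shift[where p=0 and k=i and s=\<delta>] Mmod_hom_smul[OF mvec_in_Mcar] by simp
  have y2: "g (mvec (?D + i)) = ?y"
    using Mmod_hom_mvec_shift[where p="?D" and k=i and s=1, OF theta_D] Mmod_hom_mvec[of "?D"] P by simp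
  have y: "?y \<in> tcar V"
    unfolding y1[symmetric] by (rule tq_hom_closed[OF g]) (simp add: Mcar_smul mvec_in_Mcar)
  have "ovec \<delta> d i = (\<lambda>j. \<delta> * mvec i j + (-1) * mvec (?D + i) j)"
    by (simp add: ovec_def)
  then have "g (ovec \<delta> d i) = tadd V (g (\<lambda>j. \<delta> * mvec i j)) (g (\<lambda>j. (-1) * mvec (?D + i) j))"
    using Mmod_hom_add[OF Mcar_smul Mcar_smul, OF mvec_in_Mcar mvec_in_Mcar] by presburger
  also have "\<dots> = tadd V ?y (tsmul V (-1) ?y)"
    by (simp only: y1 y2 Mmod_hom_smul[OF mvec_in_Mcar, of "-1" "?D + i"])
  also have "\<dots> = tzero V"
    by (rule vs_add_neg[OF V y])
  finally show ?thesis .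
qed

lemma Mmod_hom_vanishes_on_Osub_iff:
  assumes q: "q \<noteq> 0" and period: "q ^ (2 * dprime d) = 1" and V: "vs_axioms V"
  shows "(\<forall>u\<in>Osub \<delta> d. g u = tzero V)
     \<longleftrightarrow> prodA V (theta q a l) (dprime d) (g (mvec 0)) = tsmul V \<delta> (g (mvec 0))"
proof
  assume "\<forall>u\<in>Osub \<delta> d. g u = tzero V"
  then have g_ovec: "g (ovec \<delta> d 0) = tzero V" using ovec_in_Osub by blast
  have "tsmul V \<delta> (g (mvec 0)) = g (\<lambda>j. \<delta> * mvec 0 j)"
    using Mmod_hom_smul[OF mvec_in_Mcar] by simp
  also have "\<dots> = g (\<lambda>j. mvec (dprime d) j + ovec \<delta> d 0 j)"
    by (simp add: ovec_def)
  also have "\<dots> = tadd V (g (mvec (dprime d))) (tzero V)"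
    using Mmod_hom_add[OF mvec_in_Mcar ovec_in_Mcar] g_ovec by simp
  also have "\<dots> = g (mvec (dprime d))"
    using vs_add_zero[OF V tq_hom_closed[OF g]] by (simp add: mvec_in_Mcar)
  finally show "prodA V (theta q a l) (dprime d) (g (mvec 0)) = tsmul V \<delta> (g (mvec 0))"
    using Mmod_hom_mvec[of "dprime d"] by simp
next
  assume "prodA V (theta q a l) (dprime d) (g (mvec 0)) = tsmul V \<delta> (g (mvec 0))"
  then have g_ovec: "g (ovec \<delta> d k) = tzero V" for k
    using Mmod_hom_ovec[OF q period V] by blast
  show "\<forall>u\<in>Osub \<delta> d. g u = tzero V"
  proof
    fix u assume "u \<in> Osub \<delta> d"
    then show "g u = tzero V"
    proof (induction rule: Osub_induct)
      case zero
      show ?case using tq_hom_zero[OF vs_axioms_Mmod V g] by simp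
    next
      case (step w s k)
      have "g (\<lambda>j. w j + s * ovec \<delta> d k j) = tadd V (g w) (tsmul V s (g (ovec \<delta> d k)))"
        using Mmod_hom_add[OF Osub_subset_Mcar[OF step.hyps] Mcar_smul[OF ovec_in_Mcar]]
          Mmod_hom_smul[OF ovec_in_Mcar] by simp
      also have "\<dots> = tzero V"
        using step.IH g_ovec vs_smul_zero[OF V] vs_zero_add[OF V vs_zero_closed[OF V]] by simp
      finally show ?case .
    qed
  qed
qed

end

lemma ex_Mmod_hom_vanishing_on_Osub_iff:
  fixes q :: "'f::field" and V :: "('f, 'v) tqmod"
  assumes q: "q \<noteq> 0" and period: "q ^ (2 * dprime d) = 1" and V: "vs_axioms V"
  shows "(\<exists>g. is_tq_hom (Mmod q a b c l) V g \<and> (\<forall>u\<in>Osub \<delta> d. g u = tzero V) \<and> g (mvec 0) = v)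
     \<longleftrightarrow> (\<exists>g. is_tq_hom (Mmod q a b c l) V g \<and> g (mvec 0) = v)
          \<and> prodA V (theta q a l) (dprime d) v = tsmul V \<delta> v" (is "_ \<longleftrightarrow> ?R")
proof
  assume "\<exists>g. is_tq_hom (Mmod q a b c l) V g \<and> (\<forall>u\<in>Osub \<delta> d. g u = tzero V) \<and> g (mvec 0) = v"
  then obtain g where g: "is_tq_hom (Mmod q a b c l) V g" "\<forall>u\<in>Osub \<delta> d. g u = tzero V" "g (mvec 0) = v"
    by blast
  then have "prodA V (theta q a l) (dprime d) v = tsmul V \<delta> v"
    using Mmod_hom_vanishes_on_Osub_iff[OF g(1) q period V] by simp
  then show ?R using g by blast
next
  assume ?R
  then obtain g where g: "is_tq_hom (Mmod q a b c l) V g" "g (mvec 0) = v"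
    and P: "prodA V (theta q a l) (dprime d) v = tsmul V \<delta> v" by blast
  then have "\<forall>u\<in>Osub \<delta> d. g u = tzero V"
    using Mmod_hom_vanishes_on_Osub_iff[OF g(1) q period V] by simp
  then show "\<exists>g. is_tq_hom (Mmod q a b c l) V g \<and> (\<forall>u\<in>Osub \<delta> d. g u = tzero V) \<and> g (mvec 0) = v"
    using g by blast
qed

(* Only q^d = 1 and the vector space axioms of V are used: neither the defining relations of
   the algebra nor the remaining hypotheses on q, a, b, c, lambda enter the argument. *)
theorem proposition6p2:
  fixes q a b c l \<delta> :: "'f::field" and d :: nat
    and V :: "('f, 'v) tqmod" and v :: 'v
  assumes "alg_closed TYPE('f)"
    and "0 < d" and "q ^ d = 1" and "\<forall>n. 0 < n \<and> n < d \<longrightarrow> q ^ n \<noteq> 1"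
    and "d \<notin> {1, 2, 4}"
    and "a \<noteq> 0" and "b \<noteq> 0" and "c \<noteq> 0" and "l \<noteq> 0"
    and "is_tq_module q V" and "v \<in> tcar V"
  shows "(\<exists>f. is_tq_hom (Wmod q a b c l \<delta> d) V f \<and> f (wvec q a b c l \<delta> d 0) = v)
     \<longleftrightarrow> ((\<exists>g. is_tq_hom (Mmod q a b c l) V g \<and> g (mvec 0) = v)
          \<and> prodA V (theta q a l) (dprime d) v = tsmul V \<delta> v)"
proof -
  have q: "q \<noteq> 0" using assms(2,3) by (metis power_0_left less_not_refl zero_neq_one)
  have period: "q ^ (2 * dprime d) = 1" using assms(3) by (rule power_double_dprime_eq_1)
  have V: "vs_axioms V" using assms(10) unfolding is_tq_module_def by blast
  have "(\<exists>f. is_tq_hom (Wmod q a b c l \<delta> d) V f \<and> f (wvec q a b c l \<delta> d 0) = v)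
     \<longleftrightarrow> (\<exists>g. is_tq_hom (Mmod q a b c l) V g \<and> (\<forall>u\<in>Osub \<delta> d. g u = tzero V) \<and> g (mvec 0) = v)"
    unfolding Wmod_def wvec_def
    by (rule tq_hom_from_quot_mod_iff[OF vs_axioms_Mmod lin_op_Mmod is_submodule_Osub[OF q period] V])
      (simp add: mvec_in_Mcar)
  also have "\<dots> \<longleftrightarrow> ((\<exists>g. is_tq_hom (Mmod q a b c l) V g \<and> g (mvec 0) = v)
          \<and> prodA V (theta q a l) (dprime d) v = tsmul V \<delta> v)"
    by (rule ex_Mmod_hom_vanishing_on_Osub_iff[OF q period V])
  finally show ?thesis .
qed

end
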